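(* Let $(X,d)$ be a complete metric space and $H(X)$ the space of nonempty compact subsets of $X$ with the Hausdorff metric $h$. Fix $n\in\mathbb{N}$ and for each $i\in\mathbb{N}$ let $F_i=\{X;f_{1,i},\dots,f_{n,i}\}$ with continuous maps $f_{r,i}:X\to X$, each a $\phi$-contraction with comparison function $\phi_{r,i}$, and let $F_i(A)=\bigcup_{r=1}^n f_{r,i}(A)$ for $A\in H(X)$. Suppose there is a compact set $C\subseteq X$ which is an invariant domain for every $f_{r,i}$ ($f_{r,i}(C)\subseteq C$ for all $r,i$), and that for each $r=1,\dots,n$ the sequence $\{f_{r,i}\}_{i\in\mathbb{N}}$ converges uniformly on $C$ to a map $f_r$ as $i\to\infty$. Suppose further that the set map $F(A)=\bigcup_{r=1}^n f_r(A)$ is a $\phi$-contraction on $(H(X),h)$ for some comparison function $\phi$. Then for every nonempty compact $P\subseteq C$ the forward trajectory $\Phi_k(P)=F_k\circ F_{k-1}\circ\cdots\circ F_1(P)$ converges in $(H(X),h)$ to the unique attractor (fixed point) of $F$.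
   Context: A comparison function is a non-decreasing map $\phi:[0,\infty)\to[0,\infty)$ such that $\phi^p(t)\to0$ as $p\to\infty$ for every $t\ge0$ ($\phi^p$ the $p$-fold composition). A map $g$ on a metric space $(Y,\rho)$ is a $\phi$-contraction if $\rho(g(a),g(b))\le\phi(\rho(a,b))$ for all $a,b$. The Hausdorff metric is $h(A,B)=\max\{\max_{x\in A}\min_{y\in B}d(x,y),\max_{y\in B}\min_{x\in A}d(x,y)\}$. *)

theory Defs
  imports "HOL-Analysis.Analysis"
begin

definition comparison_fun :: "(real \<Rightarrow> real) \<Rightarrow> bool" where
  "comparison_fun \<phi> \<longleftrightarrow>
     (\<forall>t\<ge>0. \<phi> t \<ge> 0) \<and>
     (\<forall>s t. 0 \<le> s \<longrightarrow> s \<le> t \<longrightarrow> \<phi> s \<le> \<phi> t) \<and>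
     (\<forall>t\<ge>0. (\<lambda>p. (\<phi> ^^ p) t) \<longlonglongrightarrow> 0)"

definition phi_contraction :: "(real \<Rightarrow> real) \<Rightarrow> ('a::metric_space \<Rightarrow> 'a) \<Rightarrow> bool" where
  "phi_contraction \<phi> g \<longleftrightarrow> (\<forall>a b. dist (g a) (g b) \<le> \<phi> (dist a b))"

text \<open>Hausdorff metric (max of the two excesses; on nonempty compact sets the sup/inf are max/min).\<close>
definition hausdorff_dist :: "'a::metric_space set \<Rightarrow> 'a set \<Rightarrow> real" where
  "hausdorff_dist A B = max (SUP x\<in>A. infdist x B) (SUP y\<in>B. infdist y A)"

definition set_phi_contraction :: "(real \<Rightarrow> real) \<Rightarrow> ('a::metric_space set \<Rightarrow> 'a set) \<Rightarrow> bool" where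
  "set_phi_contraction \<phi> G \<longleftrightarrow>
     (\<forall>A. compact A \<and> A \<noteq> {} \<longrightarrow> compact (G A) \<and> G A \<noteq> {}) \<and>
     (\<forall>A B. compact A \<and> A \<noteq> {} \<and> compact B \<and> B \<noteq> {} \<longrightarrow>
        hausdorff_dist (G A) (G B) \<le> \<phi> (hausdorff_dist A B))"

fun traj :: "(nat \<Rightarrow> 'a set \<Rightarrow> 'a set) \<Rightarrow> 'a set \<Rightarrow> nat \<Rightarrow> 'a set" where
  "traj Fs P 0 = P"
| "traj Fs P (Suc k) = Fs (Suc k) (traj Fs P k)"

end

theory Submission
  imports Defs
begin

(* The limit operator F maps the nonempty compact subsets of C into themselves, so the decreasing
   compact sets F^m(C) converge in the Hausdorff metric to their intersection A, which is therefore
   a fixed point of F; it is the only one because F is a phi-contraction.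
   For the trajectory compare Phi_(k+m)(P) with F^m(Phi_k(P)). As F does not expand distances, the
   uniform closeness of F_j to F on C gives h(Phi_(k+m)(P), F^m(Phi_k(P))) <= m delta for large k,
   while h(F^m(Phi_k(P)), A) <= phi^m(diam C). Choosing m first and delta afterwards makes both
   terms small. *)

section \<open>Comparison functions\<close>

lemma comparison_fun_funpow_nonneg:
  assumes "comparison_fun \<phi>" "0 \<le> t"
  shows "0 \<le> (\<phi> ^^ m) t"
  using assms by (induction m) (auto simp: comparison_fun_def)

lemma comparison_fun_funpow_mono:
  assumes "comparison_fun \<phi>" "0 \<le> s" "s \<le> t"
  shows "(\<phi> ^^ m) s \<le> (\<phi> ^^ m) t"
proof (induction m)
  case (Suc m)
  then show ?case
    using assms comparison_fun_funpow_nonneg[OF assms(1,2), of m] by (auto simp: comparison_fun_def)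
qed (use assms in simp)

lemma comparison_fun_le_imp_zero:
  assumes \<phi>: "comparison_fun \<phi>" and t: "0 \<le> t" "t \<le> \<phi> t"
  shows "t = 0"
proof -
  have le_iter: "t \<le> (\<phi> ^^ p) t" for p
  proof (induction p)
    case (Suc p)
    have "\<phi> t \<le> \<phi> ((\<phi> ^^ p) t)"
      using \<phi> t(1) Suc by (auto simp: comparison_fun_def)
    then show ?case using t(2) by simp
  qed simp
  have "(\<lambda>p. (\<phi> ^^ p) t) \<longlonglongrightarrow> 0"
    using \<phi> t(1) by (simp add: comparison_fun_def)
  then have "t \<le> 0"
    using le_iter by (intro LIMSEQ_le_const) auto
  then show ?thesis using t(1) by simp
qed

lemma comparison_fun_le_self:
  assumes \<phi>: "comparison_fun \<phi>" and t: "0 \<le> t"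
  shows "\<phi> t \<le> t"
proof (rule ccontr)
  assume "\<not> \<phi> t \<le> t"
  then have "t = 0" "0 < \<phi> 0"
    using comparison_fun_le_imp_zero[OF \<phi> t] by auto
  moreover have "\<phi> 0 \<le> \<phi> (\<phi> 0)"
    using \<phi> \<open>0 < \<phi> 0\<close> by (simp add: comparison_fun_def)
  ultimately show False
    using comparison_fun_le_imp_zero[OF \<phi>, of "\<phi> 0"] by simp
qed

section \<open>Perturbed iterations of a phi-contraction\<close>

text \<open>Unlike the library locale \<^locale>\<open>Metric_space\<close>, nonnegativity is only required on
  \<open>S\<close>: \<^const>\<open>hausdorff_dist\<close> takes junk values on empty or unbounded sets.\<close>

locale metric_on_set =
  fixes S :: "'b set" and d :: "'b \<Rightarrow> 'b \<Rightarrow> real"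
  assumes nonneg: "\<lbrakk>x \<in> S; y \<in> S\<rbrakk> \<Longrightarrow> 0 \<le> d x y"
    and commute: "\<lbrakk>x \<in> S; y \<in> S\<rbrakk> \<Longrightarrow> d x y = d y x"
    and zero_iff: "\<lbrakk>x \<in> S; y \<in> S\<rbrakk> \<Longrightarrow> d x y = 0 \<longleftrightarrow> x = y"
    and triangle: "\<lbrakk>x \<in> S; y \<in> S; z \<in> S\<rbrakk> \<Longrightarrow> d x z \<le> d x y + d y z"

locale phi_contraction_on = metric_on_set S d for S d +
  fixes \<phi> :: "real \<Rightarrow> real" and G :: "'b \<Rightarrow> 'b"
  assumes comparison: "comparison_fun \<phi>"
    and maps: "x \<in> S \<Longrightarrow> G x \<in> S"
    and contraction: "\<lbrakk>x \<in> S; y \<in> S\<rbrakk> \<Longrightarrow> d (G x) (G y) \<le> \<phi> (d x y)"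
begin

lemma subset:
  assumes "S' \<subseteq> S" "\<And>x. x \<in> S' \<Longrightarrow> G x \<in> S'"
  shows "phi_contraction_on S' d \<phi> G"
  by (unfold_locales; meson assms subsetD nonneg commute zero_iff triangle comparison contraction)

lemma nonexpansive:
  assumes "x \<in> S" "y \<in> S"
  shows "d (G x) (G y) \<le> d x y"
  using contraction[OF assms] comparison_fun_le_self[OF comparison nonneg[OF assms]] by linarith

lemma funpow_maps: "x \<in> S \<Longrightarrow> (G ^^ m) x \<in> S"
  by (induction m) (auto intro: maps)

lemma fixpoint_unique:
  assumes "a \<in> S" "G a = a" "b \<in> S" "G b = b"
  shows "a = b"
proof -
  have "d a b \<le> \<phi> (d a b)"
    using contraction[of a b] assms by simp
  then have "d a b = 0"
    using comparison_fun_le_imp_zero[OF comparison nonneg] assms by blast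
  then show ?thesis using zero_iff assms by blast
qed

lemma fixpoint_of_iterates_limit:
  assumes x: "\<And>m. x m \<in> S" "\<And>m. x (Suc m) = G (x m)"
    and a: "a \<in> S" and lim: "(\<lambda>m. d (x m) a) \<longlonglongrightarrow> 0"
  shows "G a = a"
proof -
  have "d (G a) a \<le> d a (x m) + d (x (Suc m)) a" for m
  proof -
    have "d (G a) a \<le> d (G a) (x (Suc m)) + d (x (Suc m)) a"
      using triangle maps a x(1) by blast
    also have "d (G a) (x (Suc m)) \<le> d a (x m)"
      using nonexpansive[OF a x(1)] x(2) by simp
    finally show ?thesis by simp
  qed
  moreover have "(\<lambda>m. d a (x m) + d (x (Suc m)) a) \<longlonglongrightarrow> 0"
    using tendsto_add[OF lim LIMSEQ_Suc[OF lim]] commute[OF a x(1)] by simp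
  ultimately have "d (G a) a \<le> 0"
    by (intro LIMSEQ_le_const[where a = "d (G a) a"]) blast+
  then show ?thesis
    using nonneg zero_iff maps a by (meson order_antisym)
qed

lemma dist_funpow_fixpoint_le:
  assumes "y \<in> S" "a \<in> S" "G a = a"
  shows "d ((G ^^ m) y) a \<le> (\<phi> ^^ m) (d y a)"
proof (induction m)
  case (Suc m)
  have "d ((G ^^ Suc m) y) a = d (G ((G ^^ m) y)) (G a)"
    using assms(3) by simp
  also have "\<dots> \<le> \<phi> (d ((G ^^ m) y) a)"
    using contraction funpow_maps assms by blast
  also have "\<dots> \<le> \<phi> ((\<phi> ^^ m) (d y a))"
    using Suc comparison nonneg funpow_maps assms by (simp add: comparison_fun_def)
  finally show ?case by simp
qed simp

lemma perturbed_trajectory_drift: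
  assumes x: "\<And>j. x j \<in> S" "\<And>j. x (Suc j) = F (Suc j) (x j)"
    and close: "\<And>j y. k < j \<Longrightarrow> j \<le> k + m \<Longrightarrow> y \<in> S \<Longrightarrow> d (F j y) (G y) \<le> \<delta>"
  shows "d (x (k + m)) ((G ^^ m) (x k)) \<le> real m * \<delta>"
  using close
proof (induction m)
  case 0
  then show ?case using zero_iff[OF x(1)[of k] x(1)[of k]] by simp
next
  case (Suc m)
  define y where "y = (G ^^ m) (x k)"
  have y: "y \<in> S" unfolding y_def using funpow_maps x(1) by blast
  have x_Suc: "x (k + Suc m) = F (Suc (k + m)) (x (k + m))" using x(2) by simp
  have "d (x (k + Suc m)) (G y) \<le> d (x (k + Suc m)) (G (x (k + m))) + d (G (x (k + m))) (G y)"
    using triangle x(1) maps y by blast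
  also have "d (x (k + Suc m)) (G (x (k + m))) \<le> \<delta>"
    unfolding x_Suc using Suc.prems x(1) by simp
  also have "d (G (x (k + m))) (G y) \<le> real m * \<delta>"
  proof -
    have "d (x (k + m)) y \<le> real m * \<delta>"
      unfolding y_def by (rule Suc.IH) (use Suc.prems in auto)
    then show ?thesis using nonexpansive[OF x(1)[of "k + m"] y] by linarith
  qed
  finally show ?case by (simp add: y_def algebra_simps)
qed

theorem perturbed_trajectory_tendsto_fixpoint:
  assumes a: "a \<in> S" "G a = a"
    and bounded: "\<And>y. y \<in> S \<Longrightarrow> d y a \<le> M"
    and x: "\<And>j. x j \<in> S" "\<And>j. x (Suc j) = F (Suc j) (x j)"
    and uniform: "\<And>\<delta>. \<delta> > 0 \<Longrightarrow> \<forall>\<^sub>F j in sequentially. \<forall>y\<in>S. d (F j y) (G y) \<le> \<delta>"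
  shows "(\<lambda>k. d (x k) a) \<longlonglongrightarrow> 0"
proof (rule LIMSEQ_I)
  fix e :: real assume e: "0 < e"
  have "0 \<le> M" using bounded[OF a(1)] nonneg[OF a(1) a(1)] by linarith
  then have "(\<lambda>p. (\<phi> ^^ p) M) \<longlonglongrightarrow> 0"
    using comparison by (simp add: comparison_fun_def)
  then have "\<forall>\<^sub>F p in sequentially. (\<phi> ^^ p) M < e / 2"
    using e by (intro order_tendstoD(2)) auto
  then obtain m where m: "(\<phi> ^^ m) M < e / 2"
    by (auto simp: eventually_sequentially)
  define \<delta> where "\<delta> = e / (2 * (real m + 1))"
  have "0 < \<delta>" using e by (simp add: \<delta>_def)
  have m\<delta>: "real m * \<delta> < e / 2"
    using e by (simp add: \<delta>_def field_simps)
  obtain N where N: "\<And>j y. N \<le> j \<Longrightarrow> y \<in> S \<Longrightarrow> d (F j y) (G y) \<le> \<delta>"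
    using uniform[OF \<open>0 < \<delta>\<close>] unfolding eventually_sequentially by blast
  show "\<exists>K. \<forall>k\<ge>K. norm (d (x k) a - 0) < e"
  proof (intro exI allI impI)
    fix k assume k: "N + m \<le> k"
    define k0 where "k0 = k - m"
    have k_eq: "k = k0 + m" using k by (simp add: k0_def)
    have "N \<le> k0" using k by (simp add: k0_def)
    then have close: "\<And>j y. k0 < j \<Longrightarrow> y \<in> S \<Longrightarrow> d (F j y) (G y) \<le> \<delta>"
      using N by simp
    have "d (x k) a \<le> d (x k) ((G ^^ m) (x k0)) + d ((G ^^ m) (x k0)) a"
      using triangle x(1) funpow_maps a(1) by blast
    also have "\<dots> \<le> real m * \<delta> + (\<phi> ^^ m) M"
    proof (intro add_mono)
      show "d (x k) ((G ^^ m) (x k0)) \<le> real m * \<delta>"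
        unfolding k_eq by (rule perturbed_trajectory_drift[of x F, OF x(1) x(2)]) (auto intro: close)
      have "d ((G ^^ m) (x k0)) a \<le> (\<phi> ^^ m) (d (x k0) a)"
        by (rule dist_funpow_fixpoint_le[OF x(1) a])
      also have "\<dots> \<le> (\<phi> ^^ m) M"
        by (rule comparison_fun_funpow_mono[OF comparison nonneg[OF x(1) a(1)] bounded[OF x(1)]])
      finally show "d ((G ^^ m) (x k0)) a \<le> (\<phi> ^^ m) M" .
    qed
    finally have "d (x k) a < e"
      using m m\<delta> by linarith
    then show "norm (d (x k) a - 0) < e"
      using nonneg[OF x(1)[of k] a(1)] by simp
  qed
qed

end

section \<open>The Hausdorff distance\<close>

lemma hausdorff_dist_commute: "hausdorff_dist A B = hausdorff_dist B A"
  by (simp add: hausdorff_dist_def max.commute)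

lemma infdist_le_hausdorff_dist:
  assumes "bounded A" "B \<noteq> {}" "x \<in> A"
  shows "infdist x B \<le> hausdorff_dist A B"
proof -
  obtain b where b: "b \<in> B" using assms(2) by blast
  obtain e where e: "\<And>y. y \<in> A \<Longrightarrow> dist b y \<le> e"
    using assms(1) bounded_any_center by blast
  have "infdist y B \<le> e" if "y \<in> A" for y
    using infdist_le[OF b, of y] e[OF that] by (simp add: dist_commute)
  then have "bdd_above ((\<lambda>y. infdist y B) ` A)"
    by (auto simp: bdd_above_def)
  then have "infdist x B \<le> (SUP y\<in>A. infdist y B)"
    using assms(3) by (rule cSUP_upper2) simp
  then show ?thesis unfolding hausdorff_dist_def by linarith
qed

lemma hausdorff_dist_nonneg:
  assumes "bounded A" "A \<noteq> {}" "B \<noteq> {}"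
  shows "0 \<le> hausdorff_dist A B"
proof -
  obtain x where "x \<in> A" using assms(2) by blast
  then show ?thesis
    using infdist_le_hausdorff_dist[OF assms(1,3)] infdist_nonneg[of x B] by fastforce
qed

lemma hausdorff_dist_le:
  assumes "A \<noteq> {}" "B \<noteq> {}"
    and "\<And>x. x \<in> A \<Longrightarrow> infdist x B \<le> e" "\<And>y. y \<in> B \<Longrightarrow> infdist y A \<le> e"
  shows "hausdorff_dist A B \<le> e"
  unfolding hausdorff_dist_def using assms by (auto intro!: cSUP_least)

lemma infdist_le_plus_infdistI:
  assumes "B \<noteq> {}" "\<And>y. y \<in> B \<Longrightarrow> infdist x C \<le> c + dist x y"
  shows "infdist x C \<le> c + infdist x B"
proof -
  have "infdist x C - c \<le> (INF y\<in>B. dist x y)"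
    using assms by (intro cINF_greatest) (auto simp: algebra_simps)
  then show ?thesis using assms(1) by (simp add: infdist_def)
qed

lemma hausdorff_dist_triangle:
  assumes "bounded A" "bounded B" "bounded C" "A \<noteq> {}" "B \<noteq> {}" "C \<noteq> {}"
  shows "hausdorff_dist A C \<le> hausdorff_dist A B + hausdorff_dist B C"
proof (rule hausdorff_dist_le)
  fix x assume "x \<in> A"
  have "infdist x C \<le> hausdorff_dist B C + infdist x B"
  proof (rule infdist_le_plus_infdistI[OF assms(5)])
    fix y assume "y \<in> B"
    then show "infdist x C \<le> hausdorff_dist B C + dist x y"
      using infdist_le_hausdorff_dist[OF assms(2,6)] infdist_triangle[of x C y] by force
  qed
  then show "infdist x C \<le> hausdorff_dist A B + hausdorff_dist B C"
    using infdist_le_hausdorff_dist[OF assms(1,5) \<open>x \<in> A\<close>] by linarith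
next
  fix z assume "z \<in> C"
  have "infdist z A \<le> hausdorff_dist A B + infdist z B"
  proof (rule infdist_le_plus_infdistI[OF assms(5)])
    fix y assume "y \<in> B"
    then show "infdist z A \<le> hausdorff_dist A B + dist z y"
      using infdist_le_hausdorff_dist[OF assms(2,4)] infdist_triangle[of z A y]
        hausdorff_dist_commute[of B A] by fastforce
  qed
  then show "infdist z A \<le> hausdorff_dist A B + hausdorff_dist B C"
    using infdist_le_hausdorff_dist[OF assms(3,5) \<open>z \<in> C\<close>] hausdorff_dist_commute[of B C] by linarith
qed (use assms in auto)

lemma hausdorff_dist_eq_0_iff:
  assumes "compact A" "compact B" "A \<noteq> {}" "B \<noteq> {}"
  shows "hausdorff_dist A B = 0 \<longleftrightarrow> A = B"
proof
  have subset: "X \<subseteq> Y"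
    if "compact X" "compact Y" "Y \<noteq> {}" "hausdorff_dist X Y \<le> 0" for X Y :: "'a set"
  proof
    fix x assume "x \<in> X"
    then have "infdist x Y = 0"
      using infdist_le_hausdorff_dist[OF compact_imp_bounded[OF that(1)] that(3)] that(4)
        infdist_nonneg[of x Y] by fastforce
    then show "x \<in> Y"
      using in_closed_iff_infdist_zero[OF compact_imp_closed[OF that(2)] that(3)] by blast
  qed
  assume "hausdorff_dist A B = 0"
  then have "hausdorff_dist A B \<le> 0" "hausdorff_dist B A \<le> 0"
    by (simp_all add: hausdorff_dist_commute)
  then show "A = B"
    using subset[of A B] subset[of B A] assms by blast
next
  assume "A = B"
  have "hausdorff_dist A A \<le> 0"
    by (rule hausdorff_dist_le) (use assms(3) in auto)
  then show "hausdorff_dist A B = 0"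
    unfolding \<open>A = B\<close>[symmetric]
    using hausdorff_dist_nonneg[OF compact_imp_bounded[OF assms(1)] assms(3,3)] by linarith
qed

definition compact_subsets :: "'a::topological_space set \<Rightarrow> 'a set set" where
  "compact_subsets C = {B. compact B \<and> B \<noteq> {} \<and> B \<subseteq> C}"

lemma metric_on_set_hausdorff_dist:
  "metric_on_set (compact_subsets (UNIV :: 'a::metric_space set)) hausdorff_dist"
proof
  fix A B C :: "'a set"
  assume A: "A \<in> compact_subsets UNIV" and B: "B \<in> compact_subsets UNIV"
  then show "0 \<le> hausdorff_dist A B"
    by (simp add: compact_subsets_def hausdorff_dist_nonneg compact_imp_bounded)
  show "hausdorff_dist A B = hausdorff_dist B A"
    by (rule hausdorff_dist_commute)
  show "hausdorff_dist A B = 0 \<longleftrightarrow> A = B"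
    using A B by (simp add: compact_subsets_def hausdorff_dist_eq_0_iff)
  assume "C \<in> compact_subsets UNIV"
  then show "hausdorff_dist A C \<le> hausdorff_dist A B + hausdorff_dist B C"
    using A B by (simp add: compact_subsets_def hausdorff_dist_triangle compact_imp_bounded)
qed

lemma hausdorff_dist_le_diameter:
  assumes "bounded C" "A \<subseteq> C" "B \<subseteq> C" "A \<noteq> {}" "B \<noteq> {}"
  shows "hausdorff_dist A B \<le> diameter C"
proof -
  have "infdist x Y \<le> diameter C" if x: "x \<in> C" and Y: "Y \<subseteq> C" "Y \<noteq> {}" for x Y
  proof -
    obtain y where "y \<in> Y" using Y(2) by blast
    then show ?thesis
      using infdist_le[of y Y x] diameter_bounded_bound[OF assms(1) x] Y(1) by force
  qed
  then show ?thesis using assms by (intro hausdorff_dist_le) auto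
qed

section \<open>Decreasing sequences of compact sets\<close>

lemma decseq_compact_Inter_nonempty:
  fixes K :: "nat \<Rightarrow> 'a::t2_space set"
  assumes K: "\<And>m. compact (K m)" "\<And>m. K m \<noteq> {}" "decseq K"
  shows "\<Inter>(range K) \<noteq> {}"
proof -
  have "K 0 \<inter> \<Inter>(range K) \<noteq> {}"
  proof (rule compact_imp_fip[OF K(1)])
    show "closed T" if "T \<in> range K" for T
      using that K(1) compact_imp_closed by blast
    fix \<F> assume \<F>: "finite \<F>" "\<F> \<subseteq> range K"
    then obtain I where I: "finite I" "\<F> = K ` I"
      by (meson finite_subset_image)
    have "K (Max (insert 0 I)) \<subseteq> K i" if "i \<in> insert 0 I" for i
      using K(3) I(1) that by (simp add: decseq_def)
    then have "K (Max (insert 0 I)) \<subseteq> K 0 \<inter> \<Inter>\<F>"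
      using I(2) by blast
    then show "K 0 \<inter> \<Inter>\<F> \<noteq> {}"
      using K(2) by blast
  qed
  then show ?thesis by blast
qed

lemma decseq_compact_eventually_subset_open:
  fixes K :: "nat \<Rightarrow> 'a::t2_space set"
  assumes K: "\<And>m. compact (K m)" "decseq K" and U: "open U" "\<Inter>(range K) \<subseteq> U"
  shows "\<forall>\<^sub>F m in sequentially. K m \<subseteq> U"
proof -
  have "\<Inter>(range (\<lambda>m. K m - U)) = {}"
    using U(2) by blast
  then obtain m where "K m - U = {}"
    using decseq_compact_Inter_nonempty[of "\<lambda>m. K m - U"] K U(1)
    by (force simp: decseq_def compact_diff)
  then show ?thesis
    using K(2) unfolding eventually_sequentially decseq_def by blast
qed

lemma hausdorff_dist_decseq_tendsto_Inter:
  fixes K :: "nat \<Rightarrow> 'a::metric_space set"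
  assumes K: "\<And>m. compact (K m)" "\<And>m. K m \<noteq> {}" "decseq K"
  shows "(\<lambda>m. hausdorff_dist (K m) (\<Inter>(range K))) \<longlonglongrightarrow> 0"
proof (rule order_tendstoI)
  define A where "A = \<Inter>(range K)"
  have A: "A \<noteq> {}" "A \<subseteq> K m" for m
    using decseq_compact_Inter_nonempty[OF K] by (auto simp: A_def)
  show "\<forall>\<^sub>F m in sequentially. e < hausdorff_dist (K m) (\<Inter>(range K))" if "e < 0" for e
  proof (intro always_eventually allI)
    fix m
    show "e < hausdorff_dist (K m) (\<Inter>(range K))"
      using hausdorff_dist_nonneg[OF compact_imp_bounded[OF K(1)] K(2) A(1), of m] that
      unfolding A_def by linarith
  qed
  fix e :: real assume "0 < e"
  have "\<forall>\<^sub>F m in sequentially. K m \<subseteq> (\<Union>a\<in>A. ball a (e / 2))"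
    using \<open>0 < e\<close> by (intro decseq_compact_eventually_subset_open[OF K(1,3)]) (auto simp: A_def)
  then show "\<forall>\<^sub>F m in sequentially. hausdorff_dist (K m) (\<Inter>(range K)) < e"
  proof eventually_elim
    case (elim m)
    have "hausdorff_dist (K m) A \<le> e / 2"
    proof (rule hausdorff_dist_le[OF K(2) A(1)])
      fix x assume "x \<in> K m"
      then obtain a where "a \<in> A" "dist x a < e / 2"
        using elim by (auto simp: dist_commute)
      then show "infdist x A \<le> e / 2"
        by (intro infdist_le2) auto
    next
      fix y assume "y \<in> A"
      then show "infdist y (K m) \<le> e / 2"
        using A(2) \<open>0 < e\<close> by (simp add: subset_iff)
    qed
    then show ?case using \<open>0 < e\<close> by (simp add: A_def)
  qed
qed

section \<open>Iterated function systems\<close>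

lemma phi_contraction_on_hausdorff_dist:
  assumes "set_phi_contraction \<phi> G" "comparison_fun \<phi>"
  shows "phi_contraction_on (compact_subsets (UNIV :: 'a::metric_space set)) hausdorff_dist \<phi> G"
  using assms metric_on_set_hausdorff_dist unfolding set_phi_contraction_def
  by (simp add: phi_contraction_on_def phi_contraction_on_axioms_def compact_subsets_def)

lemma Inter_funpow_fixpoint:
  fixes G :: "'a::metric_space set \<Rightarrow> 'a set"
  assumes G: "phi_contraction_on (compact_subsets UNIV) hausdorff_dist \<phi> G" "mono G"
    and C: "compact C" "C \<noteq> {}" "G C \<subseteq> C"
  defines "A \<equiv> \<Inter>m. (G ^^ m) C"
  shows "compact A" "A \<noteq> {}" "A \<subseteq> C" "G A = A"
proof -
  interpret phi_contraction_on "compact_subsets UNIV" hausdorff_dist \<phi> G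
    by (rule G(1))
  define K where "K m = (G ^^ m) C" for m
  have K: "compact (K m)" "K m \<noteq> {}" for m
    using funpow_maps[of C m] C by (auto simp: K_def compact_subsets_def)
  have "K (Suc m) \<subseteq> K m" for m
    by (induction m) (use C(3) G(2) in \<open>auto simp: K_def dest: monoD\<close>)
  then have "decseq K"
    by (simp add: decseq_Suc_iff)
  have A_eq: "A = \<Inter>(range K)"
    by (simp add: A_def K_def)
  show "A \<noteq> {}"
    unfolding A_eq by (rule decseq_compact_Inter_nonempty[OF K \<open>decseq K\<close>])
  have "A \<subseteq> K 0" "closed A"
    using K compact_imp_closed by (auto simp: A_eq)
  moreover from \<open>A \<subseteq> K 0\<close> have "K 0 \<inter> A = A" by blast
  ultimately show "compact A"
    using compact_Int_closed[OF K(1)[of 0]] by metis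
  show "A \<subseteq> C"
    using \<open>A \<subseteq> K 0\<close> by (simp add: K_def)
  show "G A = A"
  proof (rule fixpoint_of_iterates_limit)
    show "(\<lambda>m. hausdorff_dist (K m) A) \<longlonglongrightarrow> 0"
      unfolding A_eq by (rule hausdorff_dist_decseq_tendsto_Inter[OF K \<open>decseq K\<close>])
  qed (use K \<open>compact A\<close> \<open>A \<noteq> {}\<close> in \<open>auto simp: K_def compact_subsets_def\<close>)
qed

lemma uniform_limit_image_subset_closed:
  assumes "closed C" "uniform_limit C f g sequentially" "\<forall>\<^sub>F i in sequentially. f i ` C \<subseteq> C"
  shows "g ` C \<subseteq> C"
proof (rule image_subsetI)
  fix x assume "x \<in> C"
  have lim: "(\<lambda>i. f i x) \<longlonglongrightarrow> g x"
    using tendsto_uniform_limitI[OF assms(2) \<open>x \<in> C\<close>] .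
  have "\<forall>\<^sub>F i in sequentially. f i x \<in> C"
    using assms(3) by eventually_elim (use \<open>x \<in> C\<close> in blast)
  from Lim_in_closed_set[OF assms(1) this _ lim] show "g x \<in> C"
    by simp
qed

lemma eventually_hausdorff_dist_UN_image_le:
  assumes R: "finite R" "R \<noteq> {}"
    and unif: "\<And>r. r \<in> R \<Longrightarrow> uniform_limit C (f r) (g r) sequentially" and "0 < \<delta>"
  shows "\<forall>\<^sub>F i in sequentially. \<forall>B. B \<noteq> {} \<and> B \<subseteq> C \<longrightarrow>
           hausdorff_dist (\<Union>r\<in>R. f r i ` B) (\<Union>r\<in>R. g r ` B) \<le> \<delta>"
proof -
  have "\<forall>\<^sub>F i in sequentially. \<forall>r\<in>R. \<forall>x\<in>C. dist (f r i x) (g r x) < \<delta>"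
    using R(1) unif \<open>0 < \<delta>\<close> by (intro eventually_ball_finite) (auto simp: uniform_limit_iff)
  then show ?thesis
  proof eventually_elim
    case (elim i)
    show ?case
    proof (intro allI impI, elim conjE)
      fix B assume B: "B \<noteq> {}" "B \<subseteq> C"
      show "hausdorff_dist (\<Union>r\<in>R. f r i ` B) (\<Union>r\<in>R. g r ` B) \<le> \<delta>"
      proof (rule hausdorff_dist_le)
        fix y assume "y \<in> (\<Union>r\<in>R. f r i ` B)"
        then obtain r x where "r \<in> R" "x \<in> B" "y = f r i x" by blast
        then show "infdist y (\<Union>r\<in>R. g r ` B) \<le> \<delta>"
          using elim B by (intro infdist_le2[of "g r x"]) (auto intro: less_imp_le)
      next
        fix y assume "y \<in> (\<Union>r\<in>R. g r ` B)"
        then obtain r x where "r \<in> R" "x \<in> B" "y = g r x" by blast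
        then show "infdist y (\<Union>r\<in>R. f r i ` B) \<le> \<delta>"
          using elim B by (intro infdist_le2[of "f r i x"]) (auto simp: dist_commute intro: less_imp_le)
      qed (use B R in auto)
    qed
  qed
qed

lemma UN_image_mem_compact_subsets:
  assumes R: "finite R" "R \<noteq> {}"
    and f: "\<And>r. r \<in> R \<Longrightarrow> continuous_on C (f r)" "\<And>r. r \<in> R \<Longrightarrow> f r ` C \<subseteq> C"
    and B: "B \<in> compact_subsets C"
  shows "(\<Union>r\<in>R. f r ` B) \<in> compact_subsets C"
proof -
  have "compact (f r ` B)" "f r ` B \<subseteq> C" if "r \<in> R" for r
    using B compact_continuous_image[OF continuous_on_subset[OF f(1)[OF that]]]
      image_mono[of B C "f r"] f(2)[OF that] by (auto simp: compact_subsets_def)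
  then show ?thesis
    using R B by (auto simp: compact_subsets_def intro!: compact_UN)
qed

lemma traj_mem:
  assumes "P \<in> K" "\<And>j B. B \<in> K \<Longrightarrow> Fs (Suc j) B \<in> K"
  shows "traj Fs P k \<in> K"
  by (induction k) (simp_all add: assms)

lemma ifs_trajectory_tendsto_fixpoint:
  assumes R: "finite R" "R \<noteq> {}" and C: "compact C"
    and f: "\<And>r i. r \<in> R \<Longrightarrow> continuous_on C (f r (Suc i))"
      "\<And>r i. r \<in> R \<Longrightarrow> f r (Suc i) ` C \<subseteq> C"
    and unif: "\<And>r. r \<in> R \<Longrightarrow> uniform_limit C (f r) (g r) sequentially"
    and G: "phi_contraction_on (compact_subsets C) hausdorff_dist \<phi> (\<lambda>B. \<Union>r\<in>R. g r ` B)"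
    and A: "A \<in> compact_subsets C" "(\<Union>r\<in>R. g r ` A) = A"
    and P: "P \<in> compact_subsets C"
  shows "(\<lambda>k. hausdorff_dist (traj (\<lambda>i B. \<Union>r\<in>R. f r i ` B) P k) A) \<longlonglongrightarrow> 0"
proof (rule phi_contraction_on.perturbed_trajectory_tendsto_fixpoint[OF G A])
  show "traj (\<lambda>i B. \<Union>r\<in>R. f r i ` B) P j \<in> compact_subsets C" for j
    using P by (intro traj_mem UN_image_mem_compact_subsets[OF R] f)
  show "hausdorff_dist B A \<le> diameter C" if "B \<in> compact_subsets C" for B
    using that A hausdorff_dist_le_diameter[OF compact_imp_bounded[OF C]]
    by (simp add: compact_subsets_def)
  show "\<forall>\<^sub>F j in sequentially. \<forall>B\<in>compact_subsets C.
          hausdorff_dist (\<Union>r\<in>R. f r j ` B) (\<Union>r\<in>R. g r ` B) \<le> \<delta>"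
    if "0 < \<delta>" for \<delta>
  proof -
    have "\<forall>\<^sub>F j in sequentially. \<forall>B. B \<noteq> {} \<and> B \<subseteq> C \<longrightarrow>
            hausdorff_dist (\<Union>r\<in>R. f r j ` B) (\<Union>r\<in>R. g r ` B) \<le> \<delta>"
      by (rule eventually_hausdorff_dist_UN_image_le[OF R]) (use unif that in auto)
    then show ?thesis
      by eventually_elim (simp add: compact_subsets_def)
  qed
qed simp

theorem corollary4p3:
  fixes n :: nat
    and f :: "nat \<Rightarrow> nat \<Rightarrow> 'a::complete_space \<Rightarrow> 'a"
    and \<phi>i :: "nat \<Rightarrow> nat \<Rightarrow> real \<Rightarrow> real"
    and g :: "nat \<Rightarrow> 'a \<Rightarrow> 'a"
    and \<phi> :: "real \<Rightarrow> real"
    and C P :: "'a set"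
  assumes n: "n \<ge> 1"
    and cont: "\<And>r i. r \<in> {1..n} \<Longrightarrow> i \<ge> 1 \<Longrightarrow> continuous_on UNIV (f r i)"
    and cmp_ri: "\<And>r i. r \<in> {1..n} \<Longrightarrow> i \<ge> 1 \<Longrightarrow> comparison_fun (\<phi>i r i)"
    and contr_ri: "\<And>r i. r \<in> {1..n} \<Longrightarrow> i \<ge> 1 \<Longrightarrow> phi_contraction (\<phi>i r i) (f r i)"
    and C: "compact C"
    and inv: "\<And>r i. r \<in> {1..n} \<Longrightarrow> i \<ge> 1 \<Longrightarrow> f r i ` C \<subseteq> C"
    and unif: "\<And>r. r \<in> {1..n} \<Longrightarrow> uniform_limit C (\<lambda>i. f r i) (g r) sequentially"
    and cmp: "comparison_fun \<phi>"
    and Fcontr: "set_phi_contraction \<phi> (\<lambda>A. \<Union>r\<in>{1..n}. g r ` A)"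
    and P: "compact P" "P \<noteq> {}" "P \<subseteq> C"
  shows "\<exists>A. compact A \<and> A \<noteq> {} \<and> (\<Union>r\<in>{1..n}. g r ` A) = A
           \<and> (\<forall>B. compact B \<and> B \<noteq> {} \<and> (\<Union>r\<in>{1..n}. g r ` B) = B \<longrightarrow> B = A)
           \<and> (\<lambda>k. hausdorff_dist (traj (\<lambda>i A. \<Union>r\<in>{1..n}. f r i ` A) P k) A) \<longlonglongrightarrow> 0"
proof -
  define G where "G = (\<lambda>B. \<Union>r\<in>{1..n}. g r ` B)"
  have R: "finite {1..n}" "{1..n} \<noteq> {}"
    using n by auto
  interpret H: phi_contraction_on "compact_subsets UNIV" hausdorff_dist \<phi> G
    unfolding G_def by (rule phi_contraction_on_hausdorff_dist[OF Fcontr cmp])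
  have "g r ` C \<subseteq> C" if "r \<in> {1..n}" for r
    using inv[OF that]
    by (intro uniform_limit_image_subset_closed[OF compact_imp_closed[OF C] unif[OF that]]
        eventually_sequentiallyI[of 1]) auto
  then have G_C: "G B \<subseteq> C" if "B \<subseteq> C" for B
    using that by (fastforce simp: G_def)
  have "mono G" "C \<noteq> {}"
    using P by (auto simp: G_def mono_def)
  obtain A where A: "compact A" "A \<noteq> {}" "A \<subseteq> C" "G A = A"
    using Inter_funpow_fixpoint[OF H.phi_contraction_on_axioms \<open>mono G\<close> C \<open>C \<noteq> {}\<close> G_C[OF order_refl]]
    by blast
  have "phi_contraction_on (compact_subsets C) hausdorff_dist \<phi> G"
    using H.maps G_C by (intro H.subset) (auto simp: compact_subsets_def)
  then have "(\<lambda>k. hausdorff_dist (traj (\<lambda>i B. \<Union>r\<in>{1..n}. f r i ` B) P k) A) \<longlonglongrightarrow> 0"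
    unfolding G_def using A P
    by (intro ifs_trajectory_tendsto_fixpoint[OF R C continuous_on_subset[OF cont] inv unif])
      (auto simp: compact_subsets_def G_def)
  moreover have "B = A" if "compact B" "B \<noteq> {}" "G B = B" for B
    using H.fixpoint_unique[of B A] that A by (simp add: compact_subsets_def)
  ultimately show ?thesis
    using A unfolding G_def by (intro exI[of _ A]) blast
qed

end
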